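(* (a) Every $m\in\mathcal N$ has a center, i.e. there is $\xi\in\mathbb R$ with $(m,\bar m'_\xi)_{L^2(d\nu_\xi)}=0$. (b) There are constants $c>0$ and $\delta>0$ such that every $m\in\mathcal M^{(1)}_\delta$ has a unique center $\xi(m)$, and for every $n\in\mathcal M^{(1)}_\delta$ with $\|m-n\|_{L^1(\mathbb R)}$ sufficiently small, $$|\xi(m)-\xi(n)|\le c\,\|m-n\|_{L^1(\mathbb R)} ;$$ similarly, for $\|m-n\|_{L^2}$ sufficiently small, $|\xi(m)-\xi(n)|\le c\,\|m-n\|_{L^2}$.
   Context: $\beta>1$; $J\in C^2(\mathbb R)$ even, $J(r)=0$ for $|r|>1$, $\int J=1$, nonincreasing on $(0,\infty)$; $m_\beta>0$ solves $m_\beta=\tanh(\beta m_\beta)$; $\bar m$ is the increasing antisymmetric solution of $\bar m=\tanh(\beta J*\bar m)$ with $\bar m(x)\to\pm m_\beta$ as $x\to\pm\infty$ ($\bar m'$ decays exponentially); $\bar m_\xi(x)=\bar m(x-\xi)$; $d\nu_\xi=dx/(1-\bar m_\xi^2)$, $(g,h)_{L^2(d\nu_\xi)}=\int gh\,d\nu_\xi$. $\mathcal N=\{m\in L^\infty(\mathbb R,[-1,1]):\ \limsup_{x\to-\infty}m(x)<0,\ \liminf_{x\to+\infty}m(x)>0\}$; $\mathcal M^{(1)}_\delta=\bigcup_{\xi\in\mathbb R}\{m\in L^\infty(\mathbb R,[-1,1]):\|m-\bar m_\xi\|_{L^2}<\delta\}$. A center of $m$ is any $\xi\in\mathbb R$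 with $(m,\bar m'_\xi)_{L^2(d\nu_\xi)}=0$. *)

theory Defs
  imports "HOL-Analysis.Analysis"
begin

text \<open>Elements of L-infinity(R,[-1,1]), represented by Borel measurable functions.\<close>
definition Linf_pm1 :: "(real \<Rightarrow> real) \<Rightarrow> bool" where
  "Linf_pm1 m \<longleftrightarrow> m \<in> borel_measurable lborel \<and> (\<forall>x. \<bar>m x\<bar> \<le> 1)"

definition classN :: "(real \<Rightarrow> real) \<Rightarrow> bool" where
  "classN m \<longleftrightarrow> Linf_pm1 m
     \<and> Limsup at_bot (\<lambda>x. ereal (m x)) < 0
     \<and> Liminf at_top (\<lambda>x. ereal (m x)) > 0"

definition L2sq_dist :: "(real \<Rightarrow> real) \<Rightarrow> (real \<Rightarrow> real) \<Rightarrow> ennreal" where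
  "L2sq_dist m n = (\<integral>\<^sup>+ x. ennreal ((m x - n x)\<^sup>2) \<partial>lborel)"

definition L1_dist :: "(real \<Rightarrow> real) \<Rightarrow> (real \<Rightarrow> real) \<Rightarrow> ennreal" where
  "L1_dist m n = (\<integral>\<^sup>+ x. ennreal \<bar>m x - n x\<bar> \<partial>lborel)"

definition M1 :: "(real \<Rightarrow> real) \<Rightarrow> real \<Rightarrow> (real \<Rightarrow> real) \<Rightarrow> bool" where
  "M1 mbar \<delta> m \<longleftrightarrow> Linf_pm1 m \<and>
     (\<exists>\<xi>. L2sq_dist m (\<lambda>x. mbar (x - \<xi>)) < ennreal (\<delta>\<^sup>2))"

text \<open>xi is a center of m: the L2(d nu_xi) inner product of m with mbar'_xi vanishes.\<close>
definition is_center :: "(real \<Rightarrow> real) \<Rightarrow> (real \<Rightarrow> real) \<Rightarrow> real \<Rightarrow> bool" where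
  "is_center mbar m \<xi> \<longleftrightarrow>
     integrable lborel (\<lambda>x. m x * deriv mbar (x - \<xi>) / (1 - (mbar (x - \<xi>))\<^sup>2)) \<and>
     (LINT x|lborel. m x * deriv mbar (x - \<xi>) / (1 - (mbar (x - \<xi>))\<^sup>2)) = 0"

end

theory Submission
  imports Defs "HOL-Probability.Sinc_Integral"
begin

text \<open>Centers of \<open>m\<close> are the zeros of \<open>\<xi> \<mapsto> \<integral> m(x) w(x - \<xi>) dx\<close> with
  \<open>w = mbar' / (1 - mbar\<^sup>2) = \<beta> (J' * mbar)\<close>, an exponentially decaying weight that is Lipschitz
  with exponentially decaying constant. For the front \<open>mbar\<^sub>\<xi>\<^sub>0\<close> this function of \<open>\<xi>\<close> is
  increasing, vanishes at \<open>\<xi>\<^sub>0\<close> and grows at rate at least \<open>\<kappa> > 0\<close> on \<open>[\<xi>\<^sub>0 - r, \<xi>\<^sub>0 + r]\<close>.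
  By Cauchy--Schwarz an \<open>L\<^sup>2\<close>-perturbation of size \<open>\<delta>\<close> moves its values and its increments by
  \<open>O(\<delta>)\<close>, so for small \<open>\<delta>\<close> there is exactly one zero, near \<open>\<xi>\<^sub>0\<close>, where the growth rate is
  still \<open>\<kappa>/2\<close>; this rate turns \<open>|\<integral> (m - n) w(\<cdot> - \<xi>)| \<le> C \<parallel>m - n\<parallel>\<close> into the Lipschitz
  bounds for the center. For \<open>m \<in> \<N>\<close>, translating the weight far to the right (left) makes the
  integral positive (negative), and the intermediate value theorem gives a center.\<close>

lemma abs_diff_le_by_deriv_bound:
  fixes f f' :: "real \<Rightarrow> real"
  assumes deriv: "\<And>z. DERIV f z :> f' z"
    and bound: "\<And>z. min x y \<le> z \<Longrightarrow> z \<le> max x y \<Longrightarrow> \<bar>f' z\<bar> \<le> B"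
  shows "\<bar>f y - f x\<bar> \<le> B * \<bar>y - x\<bar>"
proof (cases x y rule: linorder_cases)
  case less
  then obtain z where z: "x < z" "z < y" "f y - f x = (y - x) * f' z"
    using MVT2[of x y f f'] deriv by blast
  have "\<bar>f' z\<bar> \<le> B" using bound z by auto
  then show ?thesis using z less by (simp add: abs_mult mult.commute mult_left_mono)
next
  case equal
  then show ?thesis using bound[of x] by auto
next
  case greater
  then obtain z where z: "y < z" "z < x" "f x - f y = (x - y) * f' z"
    using MVT2[of y x f f'] deriv by blast
  have "\<bar>f' z\<bar> \<le> B" using bound z by auto
  then show ?thesis using z greater by (simp add: abs_mult mult.commute mult_left_mono abs_minus_commute)
qed

lemma has_real_derivative_of_quadratic_remainder:
  fixes f :: "real \<Rightarrow> real"
  assumes remainder: "\<And>h. \<bar>h\<bar> \<le> 1 \<Longrightarrow> \<bar>f (x + h) - f x - h * D\<bar> \<le> K * h\<^sup>2"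
  shows "DERIV f x :> D"
  unfolding DERIV_def LIM_eq
proof (intro allI impI)
  fix e :: real assume e: "e > 0"
  have K: "K \<ge> 0" using remainder[of 1] abs_ge_zero[of "f (x + 1) - f x - 1 * D"] by simp
  define s where "s = min 1 (e / (K + 1))"
  have s: "s > 0" using e K by (simp add: s_def)
  show "\<exists>s>0. \<forall>h. h \<noteq> 0 \<and> norm (h - 0) < s \<longrightarrow> norm ((f (x + h) - f x) / h - D) < e"
  proof (intro exI[of _ s] conjI allI impI s)
    fix h :: real assume h: "h \<noteq> 0 \<and> norm (h - 0) < s"
    have "\<bar>(f (x + h) - f x) / h - D\<bar> = \<bar>f (x + h) - f x - h * D\<bar> / \<bar>h\<bar>"
      using h by (simp add: field_simps)
    also have "\<dots> \<le> K * h\<^sup>2 / \<bar>h\<bar>"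
      using h by (intro divide_right_mono remainder) (auto simp: s_def)
    also have "\<dots> = K * \<bar>h\<bar>"
    proof -
      have "K * h\<^sup>2 = (K * \<bar>h\<bar>) * \<bar>h\<bar>" by (simp add: power2_eq_square)
      then show ?thesis using h by (simp only: nonzero_mult_div_cancel_right abs_eq_0 not_False_eq_True)
    qed
    also have "\<dots> \<le> K * (e / (K + 1))"
      using h K by (intro mult_left_mono) (auto simp: s_def)
    also have "\<dots> < e" using e K by (simp add: field_simps)
    finally show "norm ((f (x + h) - f x) / h - D) < e" by simp
  qed
qed

lemma has_real_derivative_zero_outside:
  fixes f f' :: "real \<Rightarrow> real"
  assumes "\<And>x. DERIV f x :> f' x" and "\<And>t. \<bar>t\<bar> > 1 \<Longrightarrow> f t = 0" and "\<bar>t\<bar> > 1"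
  shows "f' t = 0"
proof -
  define S where "S = (if t > 1 then {1<..} else {..<-1::real})"
  have S: "open S" "t \<in> S" "\<And>x. x \<in> S \<Longrightarrow> 0 = f x"
    using assms(2,3) by (auto simp: S_def split: if_splits)
  have "DERIV (\<lambda>_. 0::real) t :> f' t"
    by (rule has_field_derivative_transform_within_open[OF assms(1) S(1,2)]) (use S(3) in auto)
  then show ?thesis using DERIV_const DERIV_unique by blast
qed

lemma bounded_of_continuous_vanishing_outside:
  fixes g :: "real \<Rightarrow> real"
  assumes "continuous_on UNIV g" and "\<And>t. \<bar>t\<bar> > 1 \<Longrightarrow> g t = 0"
  shows "\<exists>M>0. \<forall>t. \<bar>g t\<bar> \<le> M"
proof -
  have "compact (g ` {-1..1})"
    using assms(1) by (intro compact_continuous_image) (auto intro: continuous_on_subset)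
  then obtain M where M: "\<forall>y\<in>g ` {-1..1}. \<bar>y\<bar> \<le> M"
    unfolding bounded_real by (meson compact_imp_bounded bounded_real)
  have "\<bar>g t\<bar> \<le> max M 1" for t
  proof (cases "\<bar>t\<bar> > 1")
    case False
    then have "t \<in> {-1..1}" by auto
    then show ?thesis using M by force
  qed (use assms(2) in simp)
  then show ?thesis by (intro exI[of _ "max M 1"]) auto
qed

lemma integral_bounded_by_indicator:
  fixes f :: "real \<Rightarrow> real"
  assumes f: "f \<in> borel_measurable lborel"
    and bound: "\<And>y. \<bar>f y\<bar> \<le> K * indicator {c - R..c + R} y" and R: "R \<ge> 0"
  shows "integrable lborel f" "\<bar>LINT y|lborel. f y\<bar> \<le> K * (2 * R)"
proof -
  have K: "K \<ge> 0" using bound[of c] R by (auto simp: indicator_def)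
  have majorant: "integrable lborel (\<lambda>y. K * indicator {c - R..c + R} y)"
    by (intro integrable_mult_right integrable_real_indicator) (auto simp: emeasure_lborel_Icc_eq)
  show fi: "integrable lborel f"
    by (rule Bochner_Integration.integrable_bound[OF majorant f]) (use bound K in auto)
  have "\<bar>LINT y|lborel. f y\<bar> \<le> (LINT y|lborel. K * indicator {c - R..c + R} y)"
    by (rule integral_abs_bound_integral[OF fi majorant]) (use bound in auto)
  also have "\<dots> = K * (2 * R)" using R by simp
  finally show "\<bar>LINT y|lborel. f y\<bar> \<le> K * (2 * R)" .
qed

lemma integrable_exp_abs:
  fixes b c :: real assumes b: "b > 0"
  shows "integrable lborel (\<lambda>x. exp (- b * \<bar>x - c\<bar>))"
proof -
  define g where "g x = indicator {0<..} x * exp (-(x * b))" for x :: real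
  have g: "integrable lborel g"
    using integrable_I0i_exp_mscale[OF b] unfolding set_integrable_def g_def by simp
  have "integrable lborel (\<lambda>x. g x + g (0 + (-1) * x))"
    using g lborel_integrable_real_affine[OF g, of "-1" 0] by simp
  then have "integrable lborel (\<lambda>x. exp (- b * \<bar>x\<bar>))"
  proof (rule integrable_cong_AE_imp)
    show "AE x in lborel. g x + g (0 + - 1 * x) = exp (- b * \<bar>x\<bar>)"
      using AE_lborel_singleton[of 0] by eventually_elim (auto simp: g_def indicator_def)
  qed measurable
  then show ?thesis
    using lborel_integrable_real_affine[of "\<lambda>x. exp (- b * \<bar>x\<bar>)" 1 "- c"] by simp
qed

lemma integral_exp_abs_shift:
  fixes b c :: real
  shows "(LINT x|lborel. exp (- b * \<bar>x - c\<bar>)) = (LINT x|lborel. exp (- b * \<bar>x\<bar>))"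
  using lborel_integral_real_affine[of 1 "\<lambda>x. exp (- b * \<bar>x - c\<bar>)" c] by simp

lemma integrable_of_nn_integral_less:
  fixes f :: "real \<Rightarrow> real"
  assumes f: "f \<in> borel_measurable lborel" and nonneg: "\<And>x. f x \<ge> 0"
    and less: "(\<integral>\<^sup>+ x. ennreal (f x) \<partial>lborel) < ennreal D"
  shows "integrable lborel f"
    and "(\<integral>\<^sup>+ x. ennreal (f x) \<partial>lborel) = ennreal (LINT x|lborel. f x)"
    and "(LINT x|lborel. f x) < D"
proof -
  show fi: "integrable lborel f"
    by (rule integrableI_nonneg[OF f]) (use nonneg less in \<open>auto simp: top.not_eq_extremum less_le_trans\<close>)
  show eq: "(\<integral>\<^sup>+ x. ennreal (f x) \<partial>lborel) = ennreal (LINT x|lborel. f x)"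
    by (rule nn_integral_eq_integral[OF fi]) (use nonneg in auto)
  have "0 \<le> (LINT x|lborel. f x)" using nonneg by simp
  then show "(LINT x|lborel. f x) < D"
    using less unfolding eq by (metis ennreal_less_iff)
qed

lemma quadratic_nonneg_imp_discriminant:
  fixes A B C :: real
  assumes nonneg: "\<And>t. 0 \<le> t\<^sup>2 * A - 2 * t * B + C" and A: "A \<ge> 0"
  shows "B\<^sup>2 \<le> A * C"
proof (cases "A = 0")
  case True
  have "B = 0"
  proof (rule ccontr)
    assume "B \<noteq> 0"
    then have "2 * ((C + 1) / (2 * B)) * B = C + 1" by simp
    then show False using nonneg[of "(C + 1) / (2 * B)"] True by simp
  qed
  then show ?thesis using nonneg[of 0] True by simp
next
  case False
  then have "0 \<le> A * ((B / A)\<^sup>2 * A - 2 * (B / A) * B + C)"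
    using nonneg[of "B / A"] A by (intro mult_nonneg_nonneg) auto
  also have "\<dots> = A * C - B\<^sup>2" using False by (simp add: field_simps power2_eq_square)
  finally show ?thesis by simp
qed

lemma Cauchy_Schwarz_integral:
  fixes h g :: "real \<Rightarrow> real"
  assumes [measurable]: "h \<in> borel_measurable lborel" "g \<in> borel_measurable lborel"
    and h2: "integrable lborel (\<lambda>x. (h x)\<^sup>2)" and g2: "integrable lborel (\<lambda>x. (g x)\<^sup>2)"
  shows "integrable lborel (\<lambda>x. h x * g x)"
    and "\<bar>LINT x|lborel. h x * g x\<bar> \<le> sqrt (LINT x|lborel. (h x)\<^sup>2) * sqrt (LINT x|lborel. (g x)\<^sup>2)"
proof -
  define A B D where "A = (LINT x|lborel. (h x)\<^sup>2)" and "B = (LINT x|lborel. h x * g x)"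
    and "D = (LINT x|lborel. (g x)\<^sup>2)"
  have majorant: "integrable lborel (\<lambda>x. ((h x)\<^sup>2 + (g x)\<^sup>2) / 2)"
    using h2 g2 by simp
  have "norm (h x * g x) \<le> norm (((h x)\<^sup>2 + (g x)\<^sup>2) / 2)" for x
    using sum_squares_bound[of "\<bar>h x\<bar>" "\<bar>g x\<bar>"] by (simp add: abs_mult)
  then show hg: "integrable lborel (\<lambda>x. h x * g x)"
    by (intro Bochner_Integration.integrable_bound[OF majorant] AE_I2) measurable
  have "0 \<le> t\<^sup>2 * A - 2 * t * B + D" for t
  proof -
    have "0 \<le> (LINT x|lborel. (t * h x - g x)\<^sup>2)" by simp
    also have "\<dots> = (LINT x|lborel. t\<^sup>2 * (h x)\<^sup>2 - 2 * t * (h x * g x) + (g x)\<^sup>2)"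
      by (rule Bochner_Integration.integral_cong) (simp_all add: power2_diff power_mult_distrib)
    also have "\<dots> = t\<^sup>2 * A - 2 * t * B + D"
      unfolding A_def B_def D_def
      by (subst Bochner_Integration.integral_add Bochner_Integration.integral_diff,
          use h2 g2 hg in simp_all)+
    finally show ?thesis .
  qed
  then have "B\<^sup>2 \<le> A * D"
    by (rule quadratic_nonneg_imp_discriminant) (simp add: A_def)
  then have "sqrt (B\<^sup>2) \<le> sqrt (A * D)" by (rule real_sqrt_le_mono)
  then show "\<bar>LINT x|lborel. h x * g x\<bar> \<le> sqrt (LINT x|lborel. (h x)\<^sup>2) * sqrt (LINT x|lborel. (g x)\<^sup>2)"
    by (simp add: real_sqrt_mult A_def B_def D_def)
qed

lemma isCont_of_local_lipschitz:
  fixes f :: "real \<Rightarrow> real"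
  assumes "\<And>y. \<bar>y - x\<bar> \<le> 1 \<Longrightarrow> \<bar>f y - f x\<bar> \<le> K * \<bar>y - x\<bar>"
  shows "isCont f x"
  unfolding continuous_at LIM_eq
proof (intro allI impI)
  fix e :: real assume e: "e > 0"
  have K: "K + 1 > 0" using assms[of "x + 1"] abs_ge_zero[of "f (x + 1) - f x"] by simp
  show "\<exists>s>0. \<forall>y. y \<noteq> x \<and> norm (y - x) < s \<longrightarrow> norm (f y - f x) < e"
  proof (intro exI[of _ "min 1 (e / (K + 1))"] conjI allI impI)
    show "0 < min 1 (e / (K + 1))" using e K by simp
    fix y assume y: "y \<noteq> x \<and> norm (y - x) < min 1 (e / (K + 1))"
    then have "\<bar>f y - f x\<bar> \<le> K * \<bar>y - x\<bar>" by (intro assms) auto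
    also have "\<dots> \<le> (K + 1) * \<bar>y - x\<bar>" by (simp add: distrib_right)
    also have "\<dots> < (K + 1) * (e / (K + 1))" using y K by (intro mult_strict_left_mono) auto
    also have "\<dots> = e" using K by simp
    finally show "norm (f y - f x) < e" by simp
  qed
qed

section \<open>The front and its weight function\<close>

locale front =
  fixes \<beta> m\<beta> :: real and J J' J'' mbar :: "real \<Rightarrow> real" and C a :: real
  assumes J_deriv: "\<And>x. (J has_real_derivative J' x) (at x)"
    and J'_deriv: "\<And>x. (J' has_real_derivative J'' x) (at x)"
    and J''_cont: "continuous_on UNIV J''"
    and J_supp: "\<And>r. \<bar>r\<bar> > 1 \<Longrightarrow> J r = 0"
    and m\<beta>_eq: "m\<beta> = tanh (\<beta> * m\<beta>)"
    and mbar_eq: "\<And>x. mbar x = tanh (\<beta> * (LINT y|lborel. J (x - y) * mbar y))"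
    and mbar_incr: "strict_mono mbar"
    and mbar_odd: "\<And>x. mbar (- x) = - mbar x"
    and mbar_top: "(mbar \<longlongrightarrow> m\<beta>) at_top"
    and mbar_diff: "\<And>x. mbar differentiable (at x)"
    and C_pos: "C > 0" and a_pos: "a > 0"
    and deriv_mbar_decay: "\<And>x. \<bar>deriv mbar x\<bar> \<le> C * exp (- a * \<bar>x\<bar>)"
begin

lemma mbar_less: "mbar x < m\<beta>"
proof -
  have "eventually (\<lambda>y. mbar (x + 1) \<le> mbar y) at_top"
    unfolding eventually_at_top_linorder using mbar_incr
    by (auto intro!: exI[of _ "x + 1"] simp: strict_mono_less_eq)
  then have "mbar (x + 1) \<le> m\<beta>" by (rule tendsto_le[OF _ mbar_top tendsto_const, rotated]) simp
  moreover have "mbar x < mbar (x + 1)" using mbar_incr by (simp add: strict_mono_less)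
  ultimately show ?thesis by simp
qed

lemma abs_mbar_less: "\<bar>mbar x\<bar> < m\<beta>"
  using mbar_less[of x] mbar_less[of "- x"] mbar_odd[of x] by (simp add: abs_less_iff)

lemma abs_mbar_le_1: "\<bar>mbar x\<bar> \<le> 1"
  using abs_mbar_less[of x] m\<beta>_eq tanh_real_bounds[of "\<beta> * m\<beta>"] by simp

definition q where "q = 1 - m\<beta>\<^sup>2"

lemma q_pos: "q > 0"
proof -
  have "\<bar>m\<beta>\<bar> < 1" using m\<beta>_eq tanh_real_bounds[of "\<beta> * m\<beta>"] by (simp add: abs_less_iff)
  then show ?thesis by (simp add: q_def abs_square_less_1)
qed

lemma one_minus_mbar_sq_ge: "1 - (mbar x)\<^sup>2 \<ge> q"
proof -
  have "(mbar x)\<^sup>2 \<le> m\<beta>\<^sup>2"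
    using abs_mbar_less[of x] by (metis abs_le_square_iff abs_of_pos abs_ge_zero le_less_trans less_imp_le)
  then show ?thesis by (simp add: q_def)
qed

lemma one_minus_mbar_sq_pos: "1 - (mbar x)\<^sup>2 > 0"
  using one_minus_mbar_sq_ge[of x] q_pos by linarith

lemma mbar_has_deriv: "DERIV mbar x :> deriv mbar x"
  using mbar_diff DERIV_deriv_iff_real_differentiable by blast

lemma mbar_measurable[measurable]: "mbar \<in> borel_measurable borel"
  by (meson DERIV_isCont borel_measurable_continuous_onI continuous_at_imp_continuous_on mbar_has_deriv)

lemma deriv_mbar_nonneg: "deriv mbar x \<ge> 0"
proof (rule ccontr)
  assume "\<not> deriv mbar x \<ge> 0"
  then obtain d where d: "d > 0" "\<forall>h>0. h < d \<longrightarrow> mbar x > mbar (x + h)"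
    using DERIV_neg_dec_right[OF mbar_has_deriv] by (meson not_le)
  then have "mbar (x + d / 2) < mbar x" by simp
  moreover have "mbar x < mbar (x + d / 2)" using mbar_incr d(1) by (simp add: strict_mono_less)
  ultimately show False by simp
qed

lemma deriv_mbar_even: "deriv mbar (- x) = deriv mbar x"
proof -
  have "DERIV (\<lambda>x. mbar (- x)) x :> deriv mbar (- x) * (- 1)"
    by (rule DERIV_chain2[OF mbar_has_deriv]) (auto intro!: derivative_eq_intros)
  moreover have "(\<lambda>x. mbar (- x)) = (\<lambda>x. - mbar x)" using mbar_odd by auto
  moreover have "DERIV (\<lambda>x. - mbar x) x :> - deriv mbar x"
    by (auto intro!: derivative_eq_intros mbar_has_deriv)
  ultimately show ?thesis using DERIV_unique by fastforce
qed

lemma mbar_diff_le: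
  assumes "\<bar>y - u\<bar> \<le> 2"
  shows "\<bar>mbar y - mbar u\<bar> \<le> 2 * C * exp (2 * a) * exp (- a * \<bar>u\<bar>)"
proof -
  have "\<bar>mbar y - mbar u\<bar> \<le> C * exp (2 * a) * exp (- a * \<bar>u\<bar>) * \<bar>y - u\<bar>"
  proof (rule abs_diff_le_by_deriv_bound[OF mbar_has_deriv])
    fix z assume "min u y \<le> z" "z \<le> max u y"
    then have "a * \<bar>u\<bar> \<le> a * (\<bar>z\<bar> + 2)" using assms a_pos by (intro mult_left_mono) auto
    then have "exp (- a * \<bar>z\<bar>) \<le> exp (2 * a) * exp (- a * \<bar>u\<bar>)"
      by (simp add: algebra_simps flip: exp_add)
    then show "\<bar>deriv mbar z\<bar> \<le> C * exp (2 * a) * exp (- a * \<bar>u\<bar>)"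
      using order_trans[OF deriv_mbar_decay[of z] mult_left_mono[of _ _ C]] C_pos by (simp add: mult.assoc)
  qed
  also have "\<dots> \<le> C * exp (2 * a) * exp (- a * \<bar>u\<bar>) * 2"
    using assms C_pos by (intro mult_left_mono) auto
  finally show ?thesis by (simp add: mult_ac)
qed

lemma J_measurable[measurable]: "J \<in> borel_measurable borel"
  and J'_measurable[measurable]: "J' \<in> borel_measurable borel"
  by (meson DERIV_isCont borel_measurable_continuous_onI continuous_at_imp_continuous_on J_deriv J'_deriv)+

lemma J'_supp: "\<bar>r\<bar> > 1 \<Longrightarrow> J' r = 0"
  by (rule has_real_derivative_zero_outside[OF J_deriv J_supp])

definition J_bound where "J_bound = (SOME M. M > 0 \<and> (\<forall>t. \<bar>J t\<bar> \<le> M))"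
definition J''_bound where "J''_bound = (SOME M. M > 0 \<and> (\<forall>t. \<bar>J'' t\<bar> \<le> M))"

lemma J_bound: "J_bound > 0" "\<bar>J t\<bar> \<le> J_bound"
proof -
  have "continuous_on UNIV J"
    by (meson DERIV_isCont continuous_at_imp_continuous_on J_deriv)
  from someI_ex[OF bounded_of_continuous_vanishing_outside[OF this J_supp]]
  show "J_bound > 0" "\<bar>J t\<bar> \<le> J_bound" unfolding J_bound_def by auto
qed

lemma J''_bound: "J''_bound > 0" "\<bar>J'' t\<bar> \<le> J''_bound"
proof -
  have "\<bar>r\<bar> > 1 \<Longrightarrow> J'' r = 0" for r
    by (rule has_real_derivative_zero_outside[OF J'_deriv J'_supp])
  from someI_ex[OF bounded_of_continuous_vanishing_outside[OF J''_cont this]]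
  show "J''_bound > 0" "\<bar>J'' t\<bar> \<le> J''_bound" unfolding J''_bound_def by auto
qed

lemma J'_lipschitz: "\<bar>J' u - J' v\<bar> \<le> J''_bound * \<bar>u - v\<bar>"
  using abs_diff_le_by_deriv_bound[OF J'_deriv, of v u J''_bound] J''_bound by simp

lemma abs_J'_le: "\<bar>J' t\<bar> \<le> 3 * J''_bound"
proof (cases "\<bar>t\<bar> > 1")
  case False
  then have "\<bar>t - 2\<bar> \<le> 3" by auto
  then have "J''_bound * \<bar>t - 2\<bar> \<le> J''_bound * 3" using J''_bound(1) by (intro mult_left_mono) auto
  then show ?thesis using J'_lipschitz[of t 2] J'_supp[of 2] by simp
qed (use J'_supp J''_bound in simp)

lemma J_taylor: "\<bar>J (s + h) - J s - h * J' s\<bar> \<le> J''_bound * h\<^sup>2"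
proof -
  have "\<bar>(J (s + h) - (s + h) * J' s) - (J s - s * J' s)\<bar> \<le> J''_bound * \<bar>h\<bar> * \<bar>(s + h) - s\<bar>"
  proof (rule abs_diff_le_by_deriv_bound)
    show "DERIV (\<lambda>t. J t - t * J' s) z :> J' z - J' s" for z
      by (auto intro!: derivative_eq_intros J_deriv)
    fix z assume "min s (s + h) \<le> z" "z \<le> max s (s + h)"
    then have "J''_bound * \<bar>z - s\<bar> \<le> J''_bound * \<bar>h\<bar>" using J''_bound by (intro mult_left_mono) auto
    then show "\<bar>J' z - J' s\<bar> \<le> J''_bound * \<bar>h\<bar>" using J'_lipschitz[of z s] by linarith
  qed
  then show ?thesis by (simp add: algebra_simps power2_eq_square)
qed

lemma integral_J'_eq_0: "(LINT y|lborel. J' (u - y)) = 0"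
proof -
  have "(LINT z|lborel. indicator {-2..2} z *\<^sub>R J' z) = J 2 - J (-2)"
  proof (rule integral_FTC_atLeastAtMost)
    show "(J has_vector_derivative J' x) (at x within {-2..2})" for x
      using J_deriv[of x] by (simp add: has_real_derivative_iff_has_vector_derivative has_vector_derivative_at_within)
    show "continuous_on {-2..2} J'"
      by (meson DERIV_isCont continuous_at_imp_continuous_on J'_deriv)
  qed simp
  moreover have "(\<lambda>z. indicator {-2..2} z *\<^sub>R J' z) = J'"
    using J'_supp by (force simp: indicator_def)
  ultimately have "(LINT z|lborel. J' z) = 0" using J_supp[of 2] J_supp[of "-2"] by simp
  then show ?thesis using lborel_integral_real_affine[of "-1" J' u] by simp
qed

lemma integrable_J'_shift: "integrable lborel (\<lambda>y. J' (u - y))"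
  by (rule integral_bounded_by_indicator(1)[where K = "3 * J''_bound" and c = u and R = 1])
     (use J'_supp abs_J'_le J''_bound in \<open>auto simp: indicator_def\<close>)

definition mean_field where "mean_field x = (LINT y|lborel. J (x - y) * mbar y)"
definition mean_field' where "mean_field' x = (LINT y|lborel. J' (x - y) * mbar y)"

lemma abs_mult_mbar_le: "\<bar>f\<bar> \<le> K \<Longrightarrow> \<bar>f * mbar y\<bar> \<le> K"
  using mult_mono[of "\<bar>f\<bar>" K "\<bar>mbar y\<bar>" 1] abs_mbar_le_1[of y] by (simp add: abs_mult)

lemma integrable_J_mbar: "integrable lborel (\<lambda>y. J (x - y) * mbar y)"
proof (rule integral_bounded_by_indicator(1)[where K = J_bound and c = x and R = 1])
  fix y show "\<bar>J (x - y) * mbar y\<bar> \<le> J_bound * indicator {x - 1..x + 1} y"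
    using J_supp[of "x - y"] abs_mult_mbar_le[OF J_bound(2)] by (auto simp: indicator_def)
qed auto

lemma integrable_J'_mbar: "integrable lborel (\<lambda>y. J' (u - y) * (mbar y - c))"
proof -
  have "integrable lborel (\<lambda>y. J' (u - y) * mbar y)"
  proof (rule integral_bounded_by_indicator(1)[where K = "3 * J''_bound" and c = u and R = 1])
    fix y show "\<bar>J' (u - y) * mbar y\<bar> \<le> 3 * J''_bound * indicator {u - 1..u + 1} y"
      using J'_supp[of "u - y"] abs_mult_mbar_le[OF abs_J'_le] by (auto simp: indicator_def)
  qed auto
  then show ?thesis using integrable_J'_shift[of u] by (simp add: right_diff_distrib)
qed

lemma mean_field'_eq: "mean_field' u = (LINT y|lborel. J' (u - y) * (mbar y - c))"
  using integrable_J'_mbar[of u 0] integrable_J'_shift[of u] integral_J'_eq_0[of u]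
  by (simp add: mean_field'_def right_diff_distrib)

lemma mean_field_has_deriv: "DERIV mean_field x :> mean_field' x"
proof (rule has_real_derivative_of_quadratic_remainder[where K = "4 * J''_bound"])
  fix h :: real assume h: "\<bar>h\<bar> \<le> 1"
  let ?R = "\<lambda>y. (J (x + h - y) - J (x - y) - h * J' (x - y)) * mbar y"
  have "mean_field (x + h) - mean_field x - h * mean_field' x = (LINT y|lborel. ?R y)"
    using integrable_J_mbar[of "x + h"] integrable_J_mbar[of x] integrable_J'_mbar[of x 0]
    by (simp add: mean_field_def mean_field'_def algebra_simps)
  also have "\<bar>\<dots>\<bar> \<le> J''_bound * h\<^sup>2 * (2 * 2)"
  proof (rule integral_bounded_by_indicator(2)[where c = x])
    fix y show "\<bar>?R y\<bar> \<le> J''_bound * h\<^sup>2 * indicator {x - 2..x + 2} y"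
    proof (cases "\<bar>x - y\<bar> > 2")
      case True
      then show ?thesis using J_supp J'_supp h J''_bound(1) by (simp add: indicator_def)
    next
      case False
      have "\<bar>?R y\<bar> \<le> J''_bound * h\<^sup>2"
        using J_taylor[of "x - y" h] by (intro abs_mult_mbar_le) (simp add: algebra_simps)
      moreover have "y \<in> {x - 2..x + 2}" using False by auto
      ultimately show ?thesis by simp
    qed
  qed auto
  finally show "\<bar>mean_field (x + h) - mean_field x - h * mean_field' x\<bar> \<le> 4 * J''_bound * h\<^sup>2"
    by simp
qed

lemma mean_field'_lipschitz:
  assumes "\<bar>u - v\<bar> \<le> 1"
  shows "\<bar>mean_field' u - mean_field' v\<bar> \<le> 8 * J''_bound * C * exp (2 * a) * exp (- a * \<bar>u\<bar>) * \<bar>u - v\<bar>"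
proof -
  define K where "K = J''_bound * \<bar>u - v\<bar> * (2 * C * exp (2 * a) * exp (- a * \<bar>u\<bar>))"
  let ?R = "\<lambda>y. (J' (u - y) - J' (v - y)) * (mbar y - mbar u)"
  have "mean_field' u - mean_field' v = (LINT y|lborel. ?R y)"
    using integrable_J'_mbar[of u "mbar u"] integrable_J'_mbar[of v "mbar u"]
    by (simp add: mean_field'_eq[of _ "mbar u"] left_diff_distrib)
  also have "\<bar>\<dots>\<bar> \<le> K * (2 * 2)"
  proof (rule integral_bounded_by_indicator(2)[where c = u])
    fix y show "\<bar>?R y\<bar> \<le> K * indicator {u - 2..u + 2} y"
    proof (cases "\<bar>u - y\<bar> > 2")
      case True
      then show ?thesis using J'_supp assms J''_bound(1) C_pos by (simp add: indicator_def K_def)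
    next
      case False
      have "\<bar>?R y\<bar> \<le> K" unfolding K_def abs_mult
        using J'_lipschitz[of "u - y" "v - y"] mbar_diff_le[of y u] False
        by (intro mult_mono) auto
      moreover have "y \<in> {u - 2..u + 2}" using False by auto
      ultimately show ?thesis by simp
    qed
  qed auto
  finally show ?thesis by (simp add: K_def algebra_simps)
qed

text \<open>The density of \<open>mbar'\<close> with respect to \<open>d\<nu>\<close>.\<close>

definition weight where "weight x = deriv mbar x / (1 - (mbar x)\<^sup>2)"

lemma weight_eq: "weight x = \<beta> * mean_field' x"
proof -
  have "DERIV (\<lambda>x. tanh (\<beta> * mean_field x)) x :> (1 - (tanh (\<beta> * mean_field x))\<^sup>2) * (\<beta> * mean_field' x)"
    by (auto intro!: derivative_eq_intros mean_field_has_deriv)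
  moreover have "(\<lambda>x. tanh (\<beta> * mean_field x)) = mbar"
    unfolding mean_field_def by (rule ext) (rule mbar_eq[symmetric])
  ultimately have "DERIV mbar x :> (1 - (mbar x)\<^sup>2) * (\<beta> * mean_field' x)"
    by metis
  then show ?thesis
    using one_minus_mbar_sq_pos[of x] by (simp add: weight_def DERIV_imp_deriv)
qed

lemma weight_nonneg: "weight x \<ge> 0"
  unfolding weight_def using deriv_mbar_nonneg[of x] one_minus_mbar_sq_pos[of x] by simp

lemma weight_even: "weight (- x) = weight x"
  unfolding weight_def deriv_mbar_even mbar_odd by simp

definition Cw where "Cw = C / q"

lemma Cw_pos: "Cw > 0" using C_pos q_pos by (simp add: Cw_def)

lemma weight_decay: "weight x \<le> Cw * exp (- a * \<bar>x\<bar>)"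
proof -
  have "weight x \<le> deriv mbar x / q"
    unfolding weight_def using deriv_mbar_nonneg[of x] one_minus_mbar_sq_ge[of x] q_pos
    by (intro divide_left_mono) auto
  also have "\<dots> \<le> C * exp (- a * \<bar>x\<bar>) / q"
    using deriv_mbar_decay[of x] q_pos by (intro divide_right_mono) auto
  finally show ?thesis by (simp add: Cw_def)
qed

lemma weight_le: "weight x \<le> Cw"
proof -
  have "exp (- a * \<bar>x\<bar>) \<le> 1" using a_pos by simp
  then show ?thesis using weight_decay[of x] Cw_pos mult_left_le[of "exp (- a * \<bar>x\<bar>)" Cw] by linarith
qed

definition Kw where "Kw = \<bar>\<beta>\<bar> * (8 * J''_bound * C * exp (2 * a)) + 1"

lemma Kw_pos: "Kw > 0"
  unfolding Kw_def using J''_bound C_pos by (simp add: add_nonneg_pos)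

lemma weight_lipschitz:
  assumes "\<bar>u - v\<bar> \<le> 1"
  shows "\<bar>weight u - weight v\<bar> \<le> Kw * exp (- a * \<bar>u\<bar>) * \<bar>u - v\<bar>"
proof -
  have "\<bar>weight u - weight v\<bar> = \<bar>\<beta>\<bar> * \<bar>mean_field' u - mean_field' v\<bar>"
    unfolding weight_eq by (simp flip: abs_mult add: algebra_simps)
  also have "\<dots> \<le> \<bar>\<beta>\<bar> * (8 * J''_bound * C * exp (2 * a) * exp (- a * \<bar>u\<bar>) * \<bar>u - v\<bar>)"
    by (intro mult_left_mono mean_field'_lipschitz assms) simp
  also have "\<dots> \<le> Kw * (exp (- a * \<bar>u\<bar>) * \<bar>u - v\<bar>)"
    unfolding Kw_def by (simp add: algebra_simps)
  finally show ?thesis by (simp add: mult_ac)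
qed

lemma weight_lipschitz_uniform:
  assumes "\<bar>u - v\<bar> \<le> 1"
  shows "\<bar>weight u - weight v\<bar> \<le> Kw * \<bar>u - v\<bar>"
proof -
  have "Kw * exp (- a * \<bar>u\<bar>) * \<bar>u - v\<bar> \<le> Kw * 1 * \<bar>u - v\<bar>"
    using Kw_pos a_pos by (intro mult_right_mono mult_left_mono) auto
  then show ?thesis using weight_lipschitz[OF assms] by simp
qed

lemma weight_measurable[measurable]: "weight \<in> borel_measurable borel"
proof -
  have "isCont weight u" for u
    by (rule isCont_of_local_lipschitz) (rule weight_lipschitz_uniform)
  then show ?thesis by (intro borel_measurable_continuous_onI continuous_at_imp_continuous_on) auto
qed

lemma integrable_mult_weight:
  assumes "m \<in> borel_measurable lborel" and "\<And>x. \<bar>m x\<bar> \<le> 1"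
  shows "integrable lborel (\<lambda>x. m x * weight (x - \<xi>))"
proof (rule Bochner_Integration.integrable_bound)
  show "integrable lborel (\<lambda>x. Cw * exp (- a * \<bar>x - \<xi>\<bar>))"
    using integrable_exp_abs[OF a_pos] by simp
  have "\<bar>m x\<bar> * weight (x - \<xi>) \<le> 1 * (Cw * exp (- a * \<bar>x - \<xi>\<bar>))" for x
    using assms(2)[of x] weight_decay[of "x - \<xi>"] weight_nonneg[of "x - \<xi>"] by (intro mult_mono) auto
  then show "AE x in lborel. norm (m x * weight (x - \<xi>)) \<le> norm (Cw * exp (- a * \<bar>x - \<xi>\<bar>))"
    using weight_nonneg Cw_pos by (intro AE_I2) (simp add: abs_mult)
qed (use assms(1) in measurable)

lemma integrable_weight: "integrable lborel (\<lambda>x. weight (x - \<xi>))"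
  using integrable_mult_weight[of "\<lambda>_. 1" \<xi>] by simp

lemma integrable_weight_sq: "integrable lborel (\<lambda>x. (weight (x - \<xi>))\<^sup>2)"
proof (rule Bochner_Integration.integrable_bound)
  show "integrable lborel (\<lambda>x. Cw * weight (x - \<xi>))" using integrable_weight by simp
  show "AE x in lborel. norm ((weight (x - \<xi>))\<^sup>2) \<le> norm (Cw * weight (x - \<xi>))"
    using weight_le weight_nonneg Cw_pos
    by (intro AE_I2) (simp add: power2_eq_square mult_right_mono)
qed measurable

definition W1 where "W1 = (LINT x|lborel. weight x)"
definition W2 where "W2 = (LINT x|lborel. (weight x)\<^sup>2)"

lemma integral_weight_shift: "(LINT x|lborel. weight (x - \<xi>)) = W1"
  using lborel_integral_real_affine[of 1 "\<lambda>x. weight (x - \<xi>)" \<xi>] unfolding W1_def by simp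

lemma integral_weight_sq_shift: "(LINT x|lborel. (weight (x - \<xi>))\<^sup>2) = W2"
  using lborel_integral_real_affine[of 1 "\<lambda>x. (weight (x - \<xi>))\<^sup>2" \<xi>] unfolding W2_def by simp

lemma W1_nonneg: "W1 \<ge> 0" unfolding W1_def using weight_nonneg by simp

text \<open>\<open>mbar\<close> increases somewhere, so \<open>weight\<close> is positive at some \<open>\<theta>\<close>, hence at least half
  that value on a neighbourhood of \<open>\<theta>\<close> by the Lipschitz bound.\<close>

lemma W2_pos: "W2 > 0"
proof -
  obtain \<theta> where "0 < \<theta>" "\<theta> < 1" "mbar 1 - mbar 0 = (1 - 0) * deriv mbar \<theta>"
    using MVT2[of 0 1 mbar "deriv mbar"] mbar_has_deriv by auto
  moreover have "mbar 0 < mbar 1" using mbar_incr by (simp add: strict_mono_less)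
  ultimately have w\<theta>: "weight \<theta> > 0"
    unfolding weight_def using one_minus_mbar_sq_pos[of \<theta>] by simp
  define \<rho> where "\<rho> = min 1 (weight \<theta> / (2 * Kw))"
  have \<rho>: "\<rho> > 0" "\<rho> \<le> 1" using w\<theta> Kw_pos by (auto simp: \<rho>_def)
  have "Kw * \<rho> \<le> Kw * (weight \<theta> / (2 * Kw))" using Kw_pos by (intro mult_left_mono) (auto simp: \<rho>_def)
  then have \<rho>_small: "Kw * \<rho> \<le> weight \<theta> / 2" using Kw_pos by simp
  have "(weight \<theta> / 2)\<^sup>2 * indicator {\<theta> - \<rho>..\<theta> + \<rho>} x \<le> (weight x)\<^sup>2" for x
  proof (cases "x \<in> {\<theta> - \<rho>..\<theta> + \<rho>}")
    case True
    then have "\<bar>x - \<theta>\<bar> \<le> \<rho>" by auto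
    then have "\<bar>weight x - weight \<theta>\<bar> \<le> Kw * \<rho>"
      using weight_lipschitz_uniform[of x \<theta>] \<rho> Kw_pos mult_left_mono[of "\<bar>x - \<theta>\<bar>" \<rho> Kw] by linarith
    then have "weight \<theta> / 2 \<le> weight x" using \<rho>_small by linarith
    then show ?thesis using True w\<theta> by (simp add: power_mono)
  qed simp
  then have "(LINT x|lborel. (weight \<theta> / 2)\<^sup>2 * indicator {\<theta> - \<rho>..\<theta> + \<rho>} x) \<le> W2"
    unfolding W2_def using integrable_weight_sq[of 0]
    by (intro integral_mono) (auto intro!: integrable_mult_right integrable_real_indicator simp: emeasure_lborel_Icc_eq)
  moreover have "(LINT x|lborel. (weight \<theta> / 2)\<^sup>2 * indicator {\<theta> - \<rho>..\<theta> + \<rho>} x) = (weight \<theta> / 2)\<^sup>2 * (2 * \<rho>)"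
    using \<rho> by simp
  moreover have "(weight \<theta> / 2)\<^sup>2 * (2 * \<rho>) > 0" using w\<theta> \<rho> by simp
  ultimately show ?thesis by linarith
qed

lemma W1_pos: "W1 > 0"
proof -
  have "W2 \<le> (LINT x|lborel. Cw * weight x)"
    unfolding W2_def using integrable_weight_sq[of 0] integrable_weight[of 0] weight_le weight_nonneg
    by (intro integral_mono) (auto simp: power2_eq_square mult_right_mono)
  then have "0 < Cw * W1" using W2_pos by (simp add: W1_def)
  then show ?thesis using Cw_pos by (simp add: zero_less_mult_iff)
qed

section \<open>The pairing of a profile with the shifted weight\<close>

definition pairing where "pairing m \<xi> = (LINT x|lborel. m x * weight (x - \<xi>))"

lemma Linf_pm1_integrable_pairing:
  "Linf_pm1 m \<Longrightarrow> integrable lborel (\<lambda>x. m x * weight (x - \<xi>))"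
  by (rule integrable_mult_weight) (auto simp: Linf_pm1_def)

lemma is_center_iff_pairing: "Linf_pm1 m \<Longrightarrow> is_center mbar m \<xi> \<longleftrightarrow> pairing m \<xi> = 0"
  using Linf_pm1_integrable_pairing[of m \<xi>] by (simp add: is_center_def pairing_def weight_def)

lemma pairing_diff:
  assumes "Linf_pm1 m" "Linf_pm1 n"
  shows "pairing n \<xi> - pairing m \<xi> = (LINT x|lborel. (n x - m x) * weight (x - \<xi>))"
  using Linf_pm1_integrable_pairing[OF assms(1)] Linf_pm1_integrable_pairing[OF assms(2)]
  by (simp add: pairing_def left_diff_distrib)

lemma isCont_pairing:
  assumes "Linf_pm1 m"
  shows "isCont (pairing m) \<xi>"
proof (rule isCont_of_local_lipschitz)
  define E where "E = (LINT x|lborel. exp (- a * \<bar>x\<bar>))"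
  fix \<xi>' assume d: "\<bar>\<xi>' - \<xi>\<bar> \<le> 1"
  have "\<bar>m x * weight (x - \<xi>') - m x * weight (x - \<xi>)\<bar> \<le> Kw * \<bar>\<xi>' - \<xi>\<bar> * exp (- a * \<bar>x - \<xi>\<bar>)" for x
  proof -
    have "\<bar>weight (x - \<xi>) - weight (x - \<xi>')\<bar> \<le> Kw * exp (- a * \<bar>x - \<xi>\<bar>) * \<bar>\<xi>' - \<xi>\<bar>"
      using weight_lipschitz[of "x - \<xi>" "x - \<xi>'"] d by simp
    then have "\<bar>weight (x - \<xi>') - weight (x - \<xi>)\<bar> \<le> Kw * \<bar>\<xi>' - \<xi>\<bar> * exp (- a * \<bar>x - \<xi>\<bar>)"
      by (simp add: abs_minus_commute mult_ac)
    moreover have "\<bar>m x\<bar> \<le> 1" using assms by (simp add: Linf_pm1_def)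
    ultimately have "\<bar>m x\<bar> * \<bar>weight (x - \<xi>') - weight (x - \<xi>)\<bar> \<le> 1 * (Kw * \<bar>\<xi>' - \<xi>\<bar> * exp (- a * \<bar>x - \<xi>\<bar>))"
      by (intro mult_mono) auto
    then show ?thesis by (simp add: abs_mult flip: right_diff_distrib)
  qed
  then have "\<bar>LINT x|lborel. m x * weight (x - \<xi>') - m x * weight (x - \<xi>)\<bar>
      \<le> (LINT x|lborel. Kw * \<bar>\<xi>' - \<xi>\<bar> * exp (- a * \<bar>x - \<xi>\<bar>))"
    using Linf_pm1_integrable_pairing[OF assms] integrable_exp_abs[OF a_pos]
    by (intro integral_abs_bound_integral) auto
  also have "\<dots> = Kw * E * \<bar>\<xi>' - \<xi>\<bar>"
    unfolding E_def integral_exp_abs_shift[of a \<xi>, symmetric] by simp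
  finally show "\<bar>pairing m \<xi>' - pairing m \<xi>\<bar> \<le> Kw * E * \<bar>\<xi>' - \<xi>\<bar>"
    using Linf_pm1_integrable_pairing[OF assms] by (simp add: pairing_def)
qed

definition front_pairing where "front_pairing s = (LINT y|lborel. mbar (y + s) * weight y)"

lemma Linf_pm1_mbar_shift: "Linf_pm1 (\<lambda>x. mbar (x - \<xi>\<^sub>0))"
  using abs_mbar_le_1 by (simp add: Linf_pm1_def)

lemma integrable_front_pairing: "integrable lborel (\<lambda>y. mbar (y + s) * weight y)"
  using Linf_pm1_integrable_pairing[OF Linf_pm1_mbar_shift, of "- s" 0] by simp

lemma pairing_mbar_shift: "pairing (\<lambda>x. mbar (x - \<xi>\<^sub>0)) \<xi> = front_pairing (\<xi> - \<xi>\<^sub>0)"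
  using lborel_integral_real_affine[of 1 "\<lambda>x. mbar (x - \<xi>\<^sub>0) * weight (x - \<xi>)" \<xi>]
  by (simp add: pairing_def front_pairing_def algebra_simps)

lemma front_pairing_0: "front_pairing 0 = 0"
proof -
  have "front_pairing 0 = (LINT y|lborel. mbar (0 + (-1) * y) * weight (0 + (-1) * y))"
    unfolding front_pairing_def using lborel_integral_real_affine[of "-1" "\<lambda>y. mbar y * weight y" 0] by simp
  also have "\<dots> = - front_pairing 0" unfolding front_pairing_def by (simp add: mbar_odd weight_even)
  finally show ?thesis by simp
qed

lemma front_pairing_mono: "s \<le> s' \<Longrightarrow> front_pairing s \<le> front_pairing s'"
  unfolding front_pairing_def
  by (intro integral_mono integrable_front_pairing mult_right_mono weight_nonneg)
     (auto simp: strict_mono_less_eq[OF mbar_incr])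

definition r where "r = min (1/2) (W2 / (2 * Kw * (W1 + 1)))"
definition \<kappa> where "\<kappa> = q * W2 / 2"

lemma r_pos: "r > 0"
  using W2_pos Kw_pos W1_nonneg by (auto simp: r_def)

lemma r_le_half: "r \<le> 1 / 2"
  unfolding r_def by (rule min.cobounded1)

lemma kappa_pos: "\<kappa> > 0" using q_pos W2_pos by (simp add: \<kappa>_def)

lemma kappa_r_pos: "\<kappa> * r > 0" using kappa_pos r_pos by simp

lemma mbar_increment_ge:
  assumes s: "- \<rho> \<le> s" "s < s'" "s' \<le> \<rho>" and \<rho>: "\<rho> \<le> 1"
  shows "mbar (y + s') - mbar (y + s) \<ge> q * (s' - s) * (weight y - Kw * \<rho>)"
proof -
  obtain z where z: "y + s < z" "z < y + s'"
    "mbar (y + s') - mbar (y + s) = (y + s' - (y + s)) * deriv mbar z"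
    using MVT2[of "y + s" "y + s'" mbar "deriv mbar"] mbar_has_deriv s by auto
  have "deriv mbar z = weight z * (1 - (mbar z)\<^sup>2)"
    unfolding weight_def using one_minus_mbar_sq_pos[of z] by simp
  also have "\<dots> \<ge> weight z * q"
    using one_minus_mbar_sq_ge[of z] weight_nonneg[of z] by (intro mult_left_mono) auto
  finally have "deriv mbar z \<ge> q * weight z" by (simp add: mult.commute)
  moreover have "\<bar>z - y\<bar> \<le> \<rho>" using z s by (auto simp: abs_le_iff)
  then have "weight y - Kw * \<rho> \<le> weight z"
    using weight_lipschitz_uniform[of z y] \<rho> Kw_pos mult_left_mono[of "\<bar>z - y\<bar>" \<rho> Kw] by linarith
  then have "q * (weight y - Kw * \<rho>) \<le> q * weight z" using q_pos by simp
  ultimately have "deriv mbar z \<ge> q * (weight y - Kw * \<rho>)" by linarith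
  then show ?thesis using z(3) s by (simp add: mult_left_mono mult.assoc)
qed

text \<open>The choice of \<open>r\<close> keeps the loss \<open>Kw * r * W1\<close> caused by the variation of the weight
  below \<open>W2 / 2\<close>.\<close>

lemma front_pairing_increment:
  assumes s: "- r \<le> s" "s < s'" "s' \<le> r"
  shows "front_pairing s' - front_pairing s \<ge> \<kappa> * (s' - s)"
proof -
  have pw: "q * (s' - s) * ((weight y)\<^sup>2 - Kw * r * weight y)
      \<le> (mbar (y + s') - mbar (y + s)) * weight y" for y
  proof -
    have "r \<le> 1" using r_le_half by simp
    from mult_right_mono[OF mbar_increment_ge[OF s this, of y] weight_nonneg[of y]]
    show ?thesis by (simp add: algebra_simps power2_eq_square)
  qed
  have "Kw * r * W1 \<le> W2 / 2"
  proof -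
    have "r * (2 * Kw * (W1 + 1)) \<le> W2"
      using Kw_pos W1_nonneg by (simp add: r_def pos_le_divide_eq[symmetric])
    moreover have "Kw * r * W1 \<le> Kw * r * (W1 + 1)" using Kw_pos r_pos by simp
    ultimately show ?thesis by (simp add: algebra_simps)
  qed
  then have "\<kappa> * (s' - s) \<le> q * (s' - s) * (W2 - Kw * r * W1)"
    using q_pos s by (simp add: \<kappa>_def mult_left_mono)
  also have "\<dots> = (LINT y|lborel. q * (s' - s) * ((weight y)\<^sup>2 - Kw * r * weight y))"
    using integrable_weight_sq[of 0] integrable_weight[of 0] by (simp add: W1_def W2_def)
  also have "\<dots> \<le> (LINT y|lborel. (mbar (y + s') - mbar (y + s)) * weight y)"
    using integrable_weight_sq[of 0] integrable_weight[of 0]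
      integrable_front_pairing[of s'] integrable_front_pairing[of s]
    by (intro integral_mono pw) (simp_all add: left_diff_distrib)
  also have "\<dots> = front_pairing s' - front_pairing s"
    using integrable_front_pairing[of s'] integrable_front_pairing[of s]
    by (simp add: front_pairing_def left_diff_distrib)
  finally show ?thesis .
qed

lemma front_pairing_ge: "r \<le> s \<Longrightarrow> front_pairing s \<ge> \<kappa> * r"
  using front_pairing_increment[of 0 r] front_pairing_0 front_pairing_mono[of r s] r_pos by simp

lemma front_pairing_le: "s \<le> - r \<Longrightarrow> front_pairing s \<le> - (\<kappa> * r)"
  using front_pairing_increment[of "- r" 0] front_pairing_0 front_pairing_mono[of s "- r"] r_pos by simp

lemma L2sq_dist_less:
  assumes "Linf_pm1 m" "Linf_pm1 n" and "L2sq_dist m n < ennreal D"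
  shows "integrable lborel (\<lambda>x. (m x - n x)\<^sup>2)"
    and "L2sq_dist m n = ennreal (LINT x|lborel. (m x - n x)\<^sup>2)"
    and "(LINT x|lborel. (m x - n x)\<^sup>2) < D"
proof -
  have [measurable]: "m \<in> borel_measurable lborel" "n \<in> borel_measurable lborel"
    using assms(1,2) by (simp_all add: Linf_pm1_def)
  have "(\<lambda>x. (m x - n x)\<^sup>2) \<in> borel_measurable lborel" by measurable
  from integrable_of_nn_integral_less[OF this _ assms(3)[unfolded L2sq_dist_def]]
  show "integrable lborel (\<lambda>x. (m x - n x)\<^sup>2)"
    and "L2sq_dist m n = ennreal (LINT x|lborel. (m x - n x)\<^sup>2)"
    and "(LINT x|lborel. (m x - n x)\<^sup>2) < D"
    by (simp_all add: L2sq_dist_def)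
qed

lemma L1_dist_less:
  assumes "Linf_pm1 m" "Linf_pm1 n" and "L1_dist m n < ennreal D"
  shows "integrable lborel (\<lambda>x. \<bar>m x - n x\<bar>)"
    and "L1_dist m n = ennreal (LINT x|lborel. \<bar>m x - n x\<bar>)"
    and "(LINT x|lborel. \<bar>m x - n x\<bar>) < D"
proof -
  have [measurable]: "m \<in> borel_measurable lborel" "n \<in> borel_measurable lborel"
    using assms(1,2) by (simp_all add: Linf_pm1_def)
  have "(\<lambda>x. \<bar>m x - n x\<bar>) \<in> borel_measurable lborel" by measurable
  from integrable_of_nn_integral_less[OF this _ assms(3)[unfolded L1_dist_def]]
  show "integrable lborel (\<lambda>x. \<bar>m x - n x\<bar>)"
    and "L1_dist m n = ennreal (LINT x|lborel. \<bar>m x - n x\<bar>)"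
    and "(LINT x|lborel. \<bar>m x - n x\<bar>) < D"
    by (simp_all add: L1_dist_def)
qed

lemma pairing_perturbation_le:
  assumes "h \<in> borel_measurable lborel" and "integrable lborel (\<lambda>x. (h x)\<^sup>2)"
  shows "\<bar>LINT x|lborel. h x * weight (x - \<xi>)\<bar> \<le> sqrt (LINT x|lborel. (h x)\<^sup>2) * sqrt W2"
  using Cauchy_Schwarz_integral(2)[OF assms(1) _ assms(2) integrable_weight_sq]
  by (simp add: integral_weight_sq_shift)

definition Lw where "Lw = Kw * sqrt (LINT x|lborel. exp (- (2 * a) * \<bar>x\<bar>))"

lemma Lw_nonneg: "Lw \<ge> 0" using Kw_pos by (simp add: Lw_def)

lemma pairing_perturbation_diff_le:
  assumes "h \<in> borel_measurable lborel" and "integrable lborel (\<lambda>x. (h x)\<^sup>2)"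
    and "\<bar>\<xi>\<^sub>2 - \<xi>\<^sub>1\<bar> \<le> 1"
  shows "\<bar>LINT x|lborel. h x * (weight (x - \<xi>\<^sub>2) - weight (x - \<xi>\<^sub>1))\<bar>
    \<le> sqrt (LINT x|lborel. (h x)\<^sup>2) * (Lw * \<bar>\<xi>\<^sub>2 - \<xi>\<^sub>1\<bar>)"
proof -
  let ?d = "\<lambda>x. weight (x - \<xi>\<^sub>2) - weight (x - \<xi>\<^sub>1)"
  let ?b = "\<lambda>x. (Kw * \<bar>\<xi>\<^sub>2 - \<xi>\<^sub>1\<bar>)\<^sup>2 * exp (- (2 * a) * \<bar>x - \<xi>\<^sub>1\<bar>)"
  have pw: "(?d x)\<^sup>2 \<le> ?b x" for x
  proof -
    have "\<bar>?d x\<bar> \<le> Kw * \<bar>\<xi>\<^sub>2 - \<xi>\<^sub>1\<bar> * exp (- a * \<bar>x - \<xi>\<^sub>1\<bar>)"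
      using weight_lipschitz[of "x - \<xi>\<^sub>1" "x - \<xi>\<^sub>2"] assms(3) by (simp add: abs_minus_commute mult_ac)
    from power_mono[OF this abs_ge_zero, of 2]
    have "(?d x)\<^sup>2 \<le> (Kw * \<bar>\<xi>\<^sub>2 - \<xi>\<^sub>1\<bar> * exp (- a * \<bar>x - \<xi>\<^sub>1\<bar>))\<^sup>2" by simp
    also have "\<dots> = ?b x" by (simp add: power_mult_distrib power2_eq_square flip: exp_add)
    finally show ?thesis .
  qed
  have ib: "integrable lborel ?b" using integrable_exp_abs[of "2 * a" \<xi>\<^sub>1] a_pos by simp
  have id: "integrable lborel (\<lambda>x. (?d x)\<^sup>2)"
  proof (rule Bochner_Integration.integrable_bound[OF ib])
    show "AE x in lborel. norm ((?d x)\<^sup>2) \<le> norm (?b x)" using pw by (intro AE_I2) simp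
  qed measurable
  have "(LINT x|lborel. (?d x)\<^sup>2) \<le> (LINT x|lborel. ?b x)" by (rule integral_mono[OF id ib pw])
  also have "\<dots> = (Lw * \<bar>\<xi>\<^sub>2 - \<xi>\<^sub>1\<bar>)\<^sup>2"
  proof -
    have "0 \<le> (LINT x|lborel. exp (- (2 * a) * \<bar>x\<bar>))" by simp
    then show ?thesis using integral_exp_abs_shift[of "2 * a" \<xi>\<^sub>1] by (simp add: Lw_def power_mult_distrib)
  qed
  finally have "sqrt (LINT x|lborel. (?d x)\<^sup>2) \<le> Lw * \<bar>\<xi>\<^sub>2 - \<xi>\<^sub>1\<bar>"
    using Lw_nonneg by (intro real_le_lsqrt) simp_all
  then have "sqrt (LINT x|lborel. (h x)\<^sup>2) * sqrt (LINT x|lborel. (?d x)\<^sup>2)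
      \<le> sqrt (LINT x|lborel. (h x)\<^sup>2) * (Lw * \<bar>\<xi>\<^sub>2 - \<xi>\<^sub>1\<bar>)"
    by (intro mult_left_mono) simp_all
  moreover have "\<bar>LINT x|lborel. h x * ?d x\<bar> \<le> sqrt (LINT x|lborel. (h x)\<^sup>2) * sqrt (LINT x|lborel. (?d x)\<^sup>2)"
    by (rule Cauchy_Schwarz_integral(2)[OF assms(1) _ assms(2) id]) measurable
  ultimately show ?thesis by linarith
qed

section \<open>Centers of profiles close to a translated front\<close>

definition \<delta>\<^sub>0 where "\<delta>\<^sub>0 = min (\<kappa> * r / (4 * sqrt W2)) (\<kappa> / (2 * (Lw + 1)))"

lemma delta0_pos: "\<delta>\<^sub>0 > 0"
  using kappa_pos r_pos W2_pos Lw_nonneg by (simp add: \<delta>\<^sub>0_def)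

definition near where
  "near m \<xi>\<^sub>0 \<longleftrightarrow> Linf_pm1 m \<and> L2sq_dist m (\<lambda>x. mbar (x - \<xi>\<^sub>0)) < ennreal (\<delta>\<^sub>0\<^sup>2)"

lemma M1_imp_near: "M1 mbar \<delta>\<^sub>0 m \<Longrightarrow> \<exists>\<xi>\<^sub>0. near m \<xi>\<^sub>0"
  unfolding M1_def near_def by auto

lemma near_pairing_close:
  assumes "near m \<xi>\<^sub>0"
  shows "\<bar>pairing m \<xi> - front_pairing (\<xi> - \<xi>\<^sub>0)\<bar> \<le> \<kappa> * r / 4"
    and "\<bar>\<xi>\<^sub>2 - \<xi>\<^sub>1\<bar> \<le> 1 \<Longrightarrow>
      \<bar>(pairing m \<xi>\<^sub>2 - front_pairing (\<xi>\<^sub>2 - \<xi>\<^sub>0)) - (pairing m \<xi>\<^sub>1 - front_pairing (\<xi>\<^sub>1 - \<xi>\<^sub>0))\<bar>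
        \<le> \<kappa> / 2 * \<bar>\<xi>\<^sub>2 - \<xi>\<^sub>1\<bar>"
proof -
  define h where "h x = m x - mbar (x - \<xi>\<^sub>0)" for x
  have m: "Linf_pm1 m" and d: "L2sq_dist m (\<lambda>x. mbar (x - \<xi>\<^sub>0)) < ennreal (\<delta>\<^sub>0\<^sup>2)"
    using assms by (auto simp: near_def)
  have "m \<in> borel_measurable lborel" using m by (simp add: Linf_pm1_def)
  then have hm: "h \<in> borel_measurable lborel" unfolding h_def by measurable
  have h2: "integrable lborel (\<lambda>x. (h x)\<^sup>2)" and "(LINT x|lborel. (h x)\<^sup>2) < \<delta>\<^sub>0\<^sup>2"
    using L2sq_dist_less[OF m Linf_pm1_mbar_shift d] by (simp_all add: h_def)
  then have h_norm: "sqrt (LINT x|lborel. (h x)\<^sup>2) \<le> \<delta>\<^sub>0"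
    using real_sqrt_less_mono delta0_pos by fastforce
  have hw: "integrable lborel (\<lambda>x. h x * weight (x - \<xi>))" for \<xi>
    by (rule Cauchy_Schwarz_integral(1)[OF hm _ h2 integrable_weight_sq]) measurable
  have deviation: "pairing m \<xi> - front_pairing (\<xi> - \<xi>\<^sub>0) = (LINT x|lborel. h x * weight (x - \<xi>))" for \<xi>
    using pairing_diff[OF Linf_pm1_mbar_shift[of \<xi>\<^sub>0] m, of \<xi>] by (simp add: pairing_mbar_shift h_def)
  have "\<bar>pairing m \<xi> - front_pairing (\<xi> - \<xi>\<^sub>0)\<bar> \<le> sqrt (LINT x|lborel. (h x)\<^sup>2) * sqrt W2"
    unfolding deviation by (rule pairing_perturbation_le[OF hm h2])
  also have "\<dots> \<le> \<delta>\<^sub>0 * sqrt W2" using h_norm W2_pos by (intro mult_right_mono) auto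
  also have "\<dots> \<le> \<kappa> * r / 4"
  proof -
    have "\<delta>\<^sub>0 \<le> \<kappa> * r / (4 * sqrt W2)" by (simp add: \<delta>\<^sub>0_def)
    then show ?thesis using W2_pos by (simp add: field_simps)
  qed
  finally show "\<bar>pairing m \<xi> - front_pairing (\<xi> - \<xi>\<^sub>0)\<bar> \<le> \<kappa> * r / 4" .
  assume "\<bar>\<xi>\<^sub>2 - \<xi>\<^sub>1\<bar> \<le> 1"
  then have "\<bar>LINT x|lborel. h x * (weight (x - \<xi>\<^sub>2) - weight (x - \<xi>\<^sub>1))\<bar>
      \<le> sqrt (LINT x|lborel. (h x)\<^sup>2) * (Lw * \<bar>\<xi>\<^sub>2 - \<xi>\<^sub>1\<bar>)"
    by (rule pairing_perturbation_diff_le[OF hm h2])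
  also have "\<dots> \<le> \<delta>\<^sub>0 * Lw * \<bar>\<xi>\<^sub>2 - \<xi>\<^sub>1\<bar>"
    using h_norm Lw_nonneg by (simp add: mult.assoc mult_right_mono)
  also have "\<dots> \<le> \<kappa> / 2 * \<bar>\<xi>\<^sub>2 - \<xi>\<^sub>1\<bar>"
  proof (rule mult_right_mono)
    have "\<delta>\<^sub>0 \<le> \<kappa> / (2 * (Lw + 1))" by (simp add: \<delta>\<^sub>0_def)
    then have "\<delta>\<^sub>0 * (Lw + 1) \<le> \<kappa> / 2" using Lw_nonneg by (simp add: field_simps)
    then show "\<delta>\<^sub>0 * Lw \<le> \<kappa> / 2" using delta0_pos by (simp add: algebra_simps)
  qed simp
  finally show "\<bar>(pairing m \<xi>\<^sub>2 - front_pairing (\<xi>\<^sub>2 - \<xi>\<^sub>0)) - (pairing m \<xi>\<^sub>1 - front_pairing (\<xi>\<^sub>1 - \<xi>\<^sub>0))\<bar>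
      \<le> \<kappa> / 2 * \<bar>\<xi>\<^sub>2 - \<xi>\<^sub>1\<bar>"
    unfolding deviation using hw[of \<xi>\<^sub>2] hw[of \<xi>\<^sub>1] by (simp add: right_diff_distrib)
qed

lemma near_pairing_ge: "near m \<xi>\<^sub>0 \<Longrightarrow> r \<le> \<xi> - \<xi>\<^sub>0 \<Longrightarrow> pairing m \<xi> \<ge> 3 / 4 * (\<kappa> * r)"
  using near_pairing_close(1)[of m \<xi>\<^sub>0 \<xi>] front_pairing_ge[of "\<xi> - \<xi>\<^sub>0"] by linarith

lemma near_pairing_le: "near m \<xi>\<^sub>0 \<Longrightarrow> \<xi> - \<xi>\<^sub>0 \<le> - r \<Longrightarrow> pairing m \<xi> \<le> - 3 / 4 * (\<kappa> * r)"
  using near_pairing_close(1)[of m \<xi>\<^sub>0 \<xi>] front_pairing_le[of "\<xi> - \<xi>\<^sub>0"] by linarith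

lemma near_small_pairing_imp_close:
  "near m \<xi>\<^sub>0 \<Longrightarrow> \<bar>pairing m \<xi>\<bar> < \<kappa> * r / 2 \<Longrightarrow> \<bar>\<xi> - \<xi>\<^sub>0\<bar> < r"
  using near_pairing_ge[of m \<xi>\<^sub>0 \<xi>] near_pairing_le[of m \<xi>\<^sub>0 \<xi>] kappa_r_pos by force

lemma near_has_center: "near m \<xi>\<^sub>0 \<Longrightarrow> \<exists>\<xi>. pairing m \<xi> = 0"
  using IVT[of "pairing m" "\<xi>\<^sub>0 - r" 0 "\<xi>\<^sub>0 + r"] isCont_pairing[of m]
    near_pairing_le[of m \<xi>\<^sub>0 "\<xi>\<^sub>0 - r"] near_pairing_ge[of m \<xi>\<^sub>0 "\<xi>\<^sub>0 + r"] kappa_r_pos r_pos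
  by (force simp: near_def)

lemma near_pairing_expanding:
  assumes "near m \<xi>\<^sub>0" "\<bar>\<xi>\<^sub>1 - \<xi>\<^sub>0\<bar> \<le> r" "\<bar>\<xi>\<^sub>2 - \<xi>\<^sub>0\<bar> \<le> r"
  shows "\<kappa> / 2 * \<bar>\<xi>\<^sub>2 - \<xi>\<^sub>1\<bar> \<le> \<bar>pairing m \<xi>\<^sub>2 - pairing m \<xi>\<^sub>1\<bar>"
proof -
  have "\<bar>\<xi>\<^sub>2 - \<xi>\<^sub>1\<bar> \<le> 1" using assms(2,3) r_le_half by (simp add: abs_le_iff)
  then have dev: "\<bar>(pairing m \<xi>\<^sub>2 - front_pairing (\<xi>\<^sub>2 - \<xi>\<^sub>0)) - (pairing m \<xi>\<^sub>1 - front_pairing (\<xi>\<^sub>1 - \<xi>\<^sub>0))\<bar>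
      \<le> \<kappa> / 2 * \<bar>\<xi>\<^sub>2 - \<xi>\<^sub>1\<bar>"
    by (rule near_pairing_close(2)[OF assms(1)])
  have "\<kappa> * \<bar>\<xi>\<^sub>2 - \<xi>\<^sub>1\<bar> \<le> \<bar>front_pairing (\<xi>\<^sub>2 - \<xi>\<^sub>0) - front_pairing (\<xi>\<^sub>1 - \<xi>\<^sub>0)\<bar>"
  proof (cases \<xi>\<^sub>1 \<xi>\<^sub>2 rule: linorder_cases)
    case less
    then have "\<kappa> * (\<xi>\<^sub>2 - \<xi>\<^sub>1) \<le> front_pairing (\<xi>\<^sub>2 - \<xi>\<^sub>0) - front_pairing (\<xi>\<^sub>1 - \<xi>\<^sub>0)"
      using front_pairing_increment[of "\<xi>\<^sub>1 - \<xi>\<^sub>0" "\<xi>\<^sub>2 - \<xi>\<^sub>0"] assms(2,3) by (simp add: abs_le_iff)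
    then show ?thesis using less by simp
  next
    case greater
    then have "\<kappa> * (\<xi>\<^sub>1 - \<xi>\<^sub>2) \<le> front_pairing (\<xi>\<^sub>1 - \<xi>\<^sub>0) - front_pairing (\<xi>\<^sub>2 - \<xi>\<^sub>0)"
      using front_pairing_increment[of "\<xi>\<^sub>2 - \<xi>\<^sub>0" "\<xi>\<^sub>1 - \<xi>\<^sub>0"] assms(2,3) by (simp add: abs_le_iff)
    then show ?thesis using greater by simp
  qed simp
  then show ?thesis using dev by linarith
qed

lemma near_center_dist:
  assumes "near m \<xi>\<^sub>0" "pairing m \<xi>\<^sub>c = 0" "\<bar>pairing m \<xi>\<bar> < \<kappa> * r / 2"
  shows "\<bar>\<xi> - \<xi>\<^sub>c\<bar> \<le> 2 / \<kappa> * \<bar>pairing m \<xi>\<bar>"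
proof -
  have "\<bar>\<xi>\<^sub>c - \<xi>\<^sub>0\<bar> < r" "\<bar>\<xi> - \<xi>\<^sub>0\<bar> < r"
    using near_small_pairing_imp_close[OF assms(1)] assms(2,3) kappa_r_pos by auto
  then have "\<kappa> / 2 * \<bar>\<xi> - \<xi>\<^sub>c\<bar> \<le> \<bar>pairing m \<xi>\<bar>"
    using near_pairing_expanding[OF assms(1), of \<xi>\<^sub>c \<xi>] assms(2) by simp
  then show ?thesis using kappa_pos by (simp add: field_simps)
qed

lemma near_center_unique: "near m \<xi>\<^sub>0 \<Longrightarrow> pairing m \<xi>\<^sub>1 = 0 \<Longrightarrow> pairing m \<xi>\<^sub>2 = 0 \<Longrightarrow> \<xi>\<^sub>1 = \<xi>\<^sub>2"
  using near_center_dist[of m \<xi>\<^sub>0 \<xi>\<^sub>1 \<xi>\<^sub>2] kappa_r_pos by simp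

section \<open>Existence of centers for profiles in \<open>\<N>\<close>\<close>

lemma Linf_pm1_reflect:
  assumes "Linf_pm1 m"
  shows "Linf_pm1 (\<lambda>x. - m (- x))"
proof -
  have [measurable]: "m \<in> borel_measurable lborel" using assms by (simp add: Linf_pm1_def)
  have "(\<lambda>x. - m (- x)) \<in> borel_measurable lborel" by measurable
  then show ?thesis using assms by (simp add: Linf_pm1_def)
qed

lemma pairing_reflect: "pairing (\<lambda>x. - m (- x)) \<xi> = - pairing m (- \<xi>)"
proof -
  have "pairing (\<lambda>x. - m (- x)) \<xi> = (LINT x|lborel. - m (- (0 + (-1) * x)) * weight (0 + (-1) * x - \<xi>))"
    unfolding pairing_def using lborel_integral_real_affine[of "-1" "\<lambda>x. - m (- x) * weight (x - \<xi>)" 0]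
    by simp
  also have "\<dots> = (LINT x|lborel. - (m x * weight (x - - \<xi>)))"
    using weight_even[of "x + \<xi>" for x] by (simp add: add.commute)
  finally show ?thesis by (simp add: pairing_def)
qed

lemma weight_tail_le:
  assumes "2 * s \<le> a * \<bar>y\<bar>"
  shows "weight y \<le> Cw * exp (- s) * exp (- (a / 2) * \<bar>y\<bar>)"
proof -
  have "exp (- a * \<bar>y\<bar>) \<le> exp (- s) * exp (- (a / 2) * \<bar>y\<bar>)"
    using assms by (simp add: algebra_simps flip: exp_add)
  then show ?thesis
    using order_trans[OF weight_decay[of y] mult_left_mono[of _ _ Cw]] Cw_pos by (simp add: mult.assoc)
qed

text \<open>If \<open>m \<ge> \<eta>\<close> to the right of \<open>X\<close>, the weight translated far to the right has little mass
  left of \<open>X\<close>, where only \<open>m \<ge> -1\<close> is known.\<close>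

lemma pairing_ge_if_eventually_ge:
  assumes m: "Linf_pm1 m" and \<eta>: "\<eta> \<ge> 0" and X: "\<And>x. x \<ge> X \<Longrightarrow> m x \<ge> \<eta>" and s: "s \<ge> 0"
  shows "\<eta> * W1 - (1 + \<eta>) * (Cw * exp (- s) * (LINT x|lborel. exp (- (a / 2) * \<bar>x\<bar>)))
    \<le> pairing m (X + 2 * s / a)"
proof -
  define \<xi> where "\<xi> = X + 2 * s / a"
  define T where "T x = Cw * exp (- s) * exp (- (a / 2) * \<bar>x - \<xi>\<bar>)" for x
  have pw: "\<eta> * weight (x - \<xi>) - (1 + \<eta>) * T x \<le> m x * weight (x - \<xi>)" for x
  proof (cases "x \<ge> X")
    case True
    then have "\<eta> * weight (x - \<xi>) \<le> m x * weight (x - \<xi>)"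
      using X weight_nonneg by (intro mult_right_mono) auto
    moreover have "0 \<le> (1 + \<eta>) * T x" using Cw_pos \<eta> by (simp add: T_def)
    ultimately show ?thesis by linarith
  next
    case False
    then have "2 * s / a \<le> \<bar>x - \<xi>\<bar>" by (simp add: \<xi>_def)
    then have "2 * s \<le> a * \<bar>x - \<xi>\<bar>" using a_pos by (simp add: field_simps)
    then have tail: "weight (x - \<xi>) \<le> T x" unfolding T_def by (rule weight_tail_le)
    have "- weight (x - \<xi>) \<le> m x * weight (x - \<xi>)"
      using m weight_nonneg[of "x - \<xi>"] mult_right_mono[of "- m x" 1 "weight (x - \<xi>)"]
      by (simp add: Linf_pm1_def abs_le_iff)
    moreover have "\<eta> * weight (x - \<xi>) \<le> \<eta> * T x" using tail \<eta> by (simp add: mult_left_mono)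
    ultimately show ?thesis using tail by (simp add: algebra_simps)
  qed
  have iT: "integrable lborel T" unfolding T_def using integrable_exp_abs[of "a / 2" \<xi>] a_pos by simp
  have "(LINT x|lborel. T x) = Cw * exp (- s) * (LINT x|lborel. exp (- (a / 2) * \<bar>x\<bar>))"
    unfolding T_def integral_exp_abs_shift[of "a / 2" \<xi>, symmetric] by simp
  then have "\<eta> * W1 - (1 + \<eta>) * (Cw * exp (- s) * (LINT x|lborel. exp (- (a / 2) * \<bar>x\<bar>)))
      = (LINT x|lborel. \<eta> * weight (x - \<xi>) - (1 + \<eta>) * T x)"
    using integrable_weight[of \<xi>] iT integral_weight_shift[of \<xi>] by simp
  also have "\<dots> \<le> pairing m \<xi>"
    unfolding pairing_def using integrable_weight[of \<xi>] iT
    by (intro integral_mono Linf_pm1_integrable_pairing[OF m] pw) simp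
  finally show ?thesis by (simp add: \<xi>_def)
qed

lemma pairing_pos_if_eventually_pos:
  assumes m: "Linf_pm1 m" and \<eta>: "\<eta> > 0" and X: "\<And>x. x \<ge> X \<Longrightarrow> m x \<ge> \<eta>"
  shows "\<exists>\<xi>. pairing m \<xi> > 0"
proof -
  define E where "E = (LINT x|lborel. exp (- (a / 2) * \<bar>x\<bar>))"
  have E: "E \<ge> 0" unfolding E_def by simp
  define \<tau> where "\<tau> = \<eta> * W1 / ((1 + \<eta>) * Cw * (E + 1))"
  have \<tau>: "\<tau> > 0" unfolding \<tau>_def using \<eta> W1_pos Cw_pos E by simp
  define s where "s = \<bar>ln \<tau>\<bar> + 1"
  have "exp (- s) < exp (ln \<tau>)" unfolding s_def by simp
  have "(1 + \<eta>) * (Cw * exp (- s) * E) \<le> (1 + \<eta>) * Cw * (E + 1) * exp (- s)"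
    using \<eta> Cw_pos by (simp add: algebra_simps)
  also have "\<dots> < (1 + \<eta>) * Cw * (E + 1) * \<tau>"
    using \<open>exp (- s) < exp (ln \<tau>)\<close> \<tau> \<eta> Cw_pos E by (intro mult_strict_left_mono) auto
  also have "\<dots> = \<eta> * W1" using \<eta> Cw_pos E by (simp add: \<tau>_def)
  finally have "(1 + \<eta>) * (Cw * exp (- s) * E) < \<eta> * W1" .
  moreover have "\<eta> * W1 - (1 + \<eta>) * (Cw * exp (- s) * E) \<le> pairing m (X + 2 * s / a)"
    unfolding E_def using \<eta> X by (intro pairing_ge_if_eventually_ge[OF m]) (auto simp: s_def)
  ultimately show ?thesis by (intro exI[of _ "X + 2 * s / a"]) linarith
qed

lemma classN_has_center:
  assumes "classN m"
  shows "\<exists>\<xi>. is_center mbar m \<xi>"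
proof -
  have m: "Linf_pm1 m" and lim: "Limsup at_bot (\<lambda>x. ereal (m x)) < 0" "Liminf at_top (\<lambda>x. ereal (m x)) > 0"
    using assms by (auto simp: classN_def)
  obtain \<eta> where \<eta>: "0 < ereal \<eta>" "ereal \<eta> < Liminf at_top (\<lambda>x. ereal (m x))"
    using ereal_dense2[OF lim(2)] by blast
  then obtain X where "\<And>x. x \<ge> X \<Longrightarrow> m x > \<eta>"
    using less_LiminfD[OF \<eta>(2)] by (auto simp: eventually_at_top_linorder)
  then obtain \<xi>\<^sub>p where pos: "pairing m \<xi>\<^sub>p > 0"
    using pairing_pos_if_eventually_pos[OF m, of \<eta> X] \<eta>(1) by force
  obtain \<eta>' where \<eta>': "Limsup at_bot (\<lambda>x. ereal (m x)) < ereal \<eta>'" "ereal \<eta>' < 0"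
    using ereal_dense2[OF lim(1)] by blast
  then obtain X' where X': "\<And>x. x \<le> X' \<Longrightarrow> m x < \<eta>'"
    using Limsup_lessD[OF \<eta>'(1)] by (auto simp: eventually_at_bot_linorder)
  have "- m (- x) \<ge> - \<eta>'" if "x \<ge> - X'" for x
    using X'[of "- x"] that by simp
  then obtain \<xi>' where "pairing (\<lambda>x. - m (- x)) \<xi>' > 0"
    using pairing_pos_if_eventually_pos[OF Linf_pm1_reflect[OF m], of "- \<eta>'" "- X'"] \<eta>'(2) by force
  then have neg: "pairing m (- \<xi>') < 0" by (simp add: pairing_reflect)
  have "\<exists>\<xi>. pairing m \<xi> = 0"
  proof (cases "- \<xi>' \<le> \<xi>\<^sub>p")
    case True
    then show ?thesis using IVT[of "pairing m" "- \<xi>'" 0 \<xi>\<^sub>p] neg pos isCont_pairing[OF m] by force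
  next
    case False
    then show ?thesis using IVT2[of "pairing m" "- \<xi>'" 0 \<xi>\<^sub>p] neg pos isCont_pairing[OF m] by force
  qed
  then show ?thesis using is_center_iff_pairing[OF m] by blast
qed

section \<open>Lipschitz dependence of the center\<close>

lemma pairing_diff_le_L1:
  assumes m: "Linf_pm1 m" and n: "Linf_pm1 n" and "integrable lborel (\<lambda>x. \<bar>m x - n x\<bar>)"
  shows "\<bar>pairing n \<xi> - pairing m \<xi>\<bar> \<le> Cw * (LINT x|lborel. \<bar>m x - n x\<bar>)"
proof -
  have "\<bar>(n x - m x) * weight (x - \<xi>)\<bar> \<le> Cw * \<bar>m x - n x\<bar>" for x
    using mult_right_mono[OF weight_le[of "x - \<xi>"] abs_ge_zero[of "m x - n x"]] weight_nonneg[of "x - \<xi>"]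
    by (simp add: abs_mult abs_minus_commute mult.commute)
  then have "\<bar>LINT x|lborel. (n x - m x) * weight (x - \<xi>)\<bar> \<le> (LINT x|lborel. Cw * \<bar>m x - n x\<bar>)"
    using assms(3) Linf_pm1_integrable_pairing[OF m] Linf_pm1_integrable_pairing[OF n]
    by (intro integral_abs_bound_integral) (simp_all add: left_diff_distrib)
  then show ?thesis by (simp add: pairing_diff[OF m n])
qed

lemma pairing_diff_le_L2:
  assumes m: "Linf_pm1 m" and n: "Linf_pm1 n" and "integrable lborel (\<lambda>x. (m x - n x)\<^sup>2)"
  shows "\<bar>pairing n \<xi> - pairing m \<xi>\<bar> \<le> sqrt (LINT x|lborel. (m x - n x)\<^sup>2) * sqrt W2"
proof -
  have [measurable]: "m \<in> borel_measurable lborel" "n \<in> borel_measurable lborel"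
    using m n by (simp_all add: Linf_pm1_def)
  have "(\<lambda>x. (n x - m x)\<^sup>2) = (\<lambda>x. (m x - n x)\<^sup>2)" by (simp add: power2_commute)
  then show ?thesis
    using pairing_perturbation_le[of "\<lambda>x. n x - m x" \<xi>] assms(3) by (simp add: pairing_diff[OF m n])
qed

definition lip_const where "lip_const = 2 / \<kappa> * max Cw (sqrt W2)"

lemma lip_const_pos: "lip_const > 0"
  using kappa_pos Cw_pos by (simp add: lip_const_def)

lemma lip_const_ge: "2 / \<kappa> * Cw \<le> lip_const" "2 / \<kappa> * sqrt W2 \<le> lip_const"
  unfolding lip_const_def using kappa_pos by (intro mult_left_mono; simp)+

lemma M1_unique_center:
  assumes "M1 mbar \<delta>\<^sub>0 m"
  shows "\<exists>!\<xi>. is_center mbar m \<xi>"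
proof -
  obtain \<xi>\<^sub>0 where near: "near m \<xi>\<^sub>0" using M1_imp_near[OF assms] by blast
  then have "Linf_pm1 m" by (simp add: near_def)
  then show ?thesis
    using near_has_center[OF near] near_center_unique[OF near] is_center_iff_pairing by blast
qed

text \<open>Only the nearness of \<open>n\<close> to a front is used: the center of \<open>m\<close> makes \<open>pairing n\<close> small,
  which pins it down near the center of \<open>n\<close>.\<close>

lemma center_dist_le:
  assumes m: "Linf_pm1 m" and n: "M1 mbar \<delta>\<^sub>0 n"
    and centers: "is_center mbar m \<xi>\<^sub>m" "is_center mbar n \<xi>\<^sub>n"
    and small: "\<bar>pairing n \<xi>\<^sub>m - pairing m \<xi>\<^sub>m\<bar> \<le> B" "B < \<kappa> * r / 2"
  shows "\<bar>\<xi>\<^sub>m - \<xi>\<^sub>n\<bar> \<le> 2 / \<kappa> * B"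
proof -
  obtain \<xi>\<^sub>0 where near: "near n \<xi>\<^sub>0" using M1_imp_near[OF n] by blast
  have "pairing m \<xi>\<^sub>m = 0" "pairing n \<xi>\<^sub>n = 0"
    using centers m near by (simp_all add: is_center_iff_pairing near_def)
  then have "\<bar>\<xi>\<^sub>m - \<xi>\<^sub>n\<bar> \<le> 2 / \<kappa> * \<bar>pairing n \<xi>\<^sub>m\<bar>"
    using near_center_dist[OF near] small by simp
  also have "\<dots> \<le> 2 / \<kappa> * B" using small \<open>pairing m \<xi>\<^sub>m = 0\<close> kappa_pos by (intro mult_left_mono) auto
  finally show ?thesis .
qed

lemma center_lipschitz_L1:
  assumes "M1 mbar \<delta>\<^sub>0 m"
  shows "\<exists>\<epsilon>>0. \<forall>n \<xi>\<^sub>m \<xi>\<^sub>n. M1 mbar \<delta>\<^sub>0 n \<and> L1_dist m n < ennreal \<epsilon>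
    \<and> is_center mbar m \<xi>\<^sub>m \<and> is_center mbar n \<xi>\<^sub>n
    \<longrightarrow> ennreal \<bar>\<xi>\<^sub>m - \<xi>\<^sub>n\<bar> \<le> ennreal lip_const * L1_dist m n"
proof (intro exI[of _ "\<kappa> * r / (2 * Cw)"] conjI allI impI)
  show "\<kappa> * r / (2 * Cw) > 0" using kappa_r_pos Cw_pos by simp
  fix n \<xi>\<^sub>m \<xi>\<^sub>n
  assume *: "M1 mbar \<delta>\<^sub>0 n \<and> L1_dist m n < ennreal (\<kappa> * r / (2 * Cw))
    \<and> is_center mbar m \<xi>\<^sub>m \<and> is_center mbar n \<xi>\<^sub>n"
  have m: "Linf_pm1 m" and n: "Linf_pm1 n" using assms * by (simp_all add: M1_def)
  have d: "L1_dist m n < ennreal (\<kappa> * r / (2 * Cw))" using * by simp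
  define l where "l = (LINT x|lborel. \<bar>m x - n x\<bar>)"
  have l: "L1_dist m n = ennreal l" "l < \<kappa> * r / (2 * Cw)" "l \<ge> 0"
    using L1_dist_less[OF m n d] by (simp_all add: l_def)
  have "\<bar>pairing n \<xi>\<^sub>m - pairing m \<xi>\<^sub>m\<bar> \<le> Cw * l"
    using pairing_diff_le_L1[OF m n L1_dist_less(1)[OF m n d]] by (simp add: l_def)
  moreover have "Cw * l < \<kappa> * r / 2" using l Cw_pos by (simp add: field_simps)
  ultimately have "\<bar>\<xi>\<^sub>m - \<xi>\<^sub>n\<bar> \<le> 2 / \<kappa> * (Cw * l)"
    using center_dist_le[OF m] * by blast
  also have "\<dots> \<le> lip_const * l"
    using mult_right_mono[OF lip_const_ge(1) l(3)] by (simp add: mult.assoc)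
  finally show "ennreal \<bar>\<xi>\<^sub>m - \<xi>\<^sub>n\<bar> \<le> ennreal lip_const * L1_dist m n"
    using l lip_const_pos by (simp add: ennreal_mult[symmetric] ennreal_leI)
qed

lemma center_lipschitz_L2:
  assumes "M1 mbar \<delta>\<^sub>0 m"
  shows "\<exists>\<epsilon>>0. \<forall>n \<xi>\<^sub>m \<xi>\<^sub>n. M1 mbar \<delta>\<^sub>0 n \<and> L2sq_dist m n < ennreal (\<epsilon>\<^sup>2)
    \<and> is_center mbar m \<xi>\<^sub>m \<and> is_center mbar n \<xi>\<^sub>n
    \<longrightarrow> ennreal ((\<xi>\<^sub>m - \<xi>\<^sub>n)\<^sup>2) \<le> ennreal (lip_const\<^sup>2) * L2sq_dist m n"
proof (intro exI[of _ "\<kappa> * r / (2 * sqrt W2)"] conjI allI impI)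
  define \<epsilon> where "\<epsilon> = \<kappa> * r / (2 * sqrt W2)"
  show "\<kappa> * r / (2 * sqrt W2) > 0" using kappa_r_pos W2_pos by simp
  fix n \<xi>\<^sub>m \<xi>\<^sub>n
  assume *: "M1 mbar \<delta>\<^sub>0 n \<and> L2sq_dist m n < ennreal ((\<kappa> * r / (2 * sqrt W2))\<^sup>2)
    \<and> is_center mbar m \<xi>\<^sub>m \<and> is_center mbar n \<xi>\<^sub>n"
  have m: "Linf_pm1 m" and n: "Linf_pm1 n" using assms * by (simp_all add: M1_def)
  have d: "L2sq_dist m n < ennreal (\<epsilon>\<^sup>2)" using * by (simp add: \<epsilon>_def)
  define l where "l = (LINT x|lborel. (m x - n x)\<^sup>2)"
  have l: "L2sq_dist m n = ennreal l" "l < \<epsilon>\<^sup>2" "l \<ge> 0"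
    using L2sq_dist_less[OF m n d] by (simp_all add: l_def)
  have "\<bar>pairing n \<xi>\<^sub>m - pairing m \<xi>\<^sub>m\<bar> \<le> sqrt l * sqrt W2"
    using pairing_diff_le_L2[OF m n L2sq_dist_less(1)[OF m n d]] by (simp add: l_def)
  moreover have "sqrt l * sqrt W2 < \<kappa> * r / 2"
  proof -
    have "sqrt l < \<epsilon>" using l kappa_r_pos W2_pos by (simp add: \<epsilon>_def real_sqrt_less_iff real_less_lsqrt)
    then show ?thesis using W2_pos by (simp add: \<epsilon>_def field_simps)
  qed
  ultimately have "\<bar>\<xi>\<^sub>m - \<xi>\<^sub>n\<bar> \<le> 2 / \<kappa> * (sqrt l * sqrt W2)"
    using center_dist_le[OF m] * by blast
  also have "\<dots> \<le> lip_const * sqrt l"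
    using mult_right_mono[OF lip_const_ge(2) real_sqrt_ge_zero[OF l(3)]] by (simp add: mult_ac)
  finally have "(\<xi>\<^sub>m - \<xi>\<^sub>n)\<^sup>2 \<le> (lip_const * sqrt l)\<^sup>2"
    by (metis abs_ge_zero power2_abs power_mono)
  then show "ennreal ((\<xi>\<^sub>m - \<xi>\<^sub>n)\<^sup>2) \<le> ennreal (lip_const\<^sup>2) * L2sq_dist m n"
    using l by (simp add: power_mult_distrib ennreal_mult[symmetric] ennreal_leI)
qed

end

theorem lemmaB1:
  fixes \<beta> m\<beta> :: real and J mbar :: "real \<Rightarrow> real"
  assumes beta: "\<beta> > 1"
    and J_C2: "\<exists>J' J''. (\<forall>x. (J has_real_derivative J' x) (at x)
                 \<and> (J' has_real_derivative J'' x) (at x)) \<and> continuous_on UNIV J''"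
    and J_even: "\<forall>r. J (- r) = J r"
    and J_supp: "\<forall>r. \<bar>r\<bar> > 1 \<longrightarrow> J r = 0"
    and J_int: "(J has_integral 1) UNIV"
    and J_noninc: "\<forall>r s. 0 < r \<and> r \<le> s \<longrightarrow> J s \<le> J r"
    and mb_pos: "m\<beta> > 0"
    and mb_eq: "m\<beta> = tanh (\<beta> * m\<beta>)"
    and mbar_eq: "\<forall>x. mbar x = tanh (\<beta> * (LINT y|lborel. J (x - y) * mbar y))"
    and mbar_incr: "strict_mono mbar"
    and mbar_odd: "\<forall>x. mbar (- x) = - mbar x"
    and mbar_top: "(mbar \<longlongrightarrow> m\<beta>) at_top"
    and mbar_bot: "(mbar \<longlongrightarrow> - m\<beta>) at_bot"
    and mbar_diff: "\<forall>x. mbar differentiable (at x)"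
    and mbar_decay: "\<exists>C a. C > 0 \<and> a > 0 \<and> (\<forall>x. \<bar>deriv mbar x\<bar> \<le> C * exp (- a * \<bar>x\<bar>))"
  shows "(\<forall>m. classN m \<longrightarrow> (\<exists>\<xi>. is_center mbar m \<xi>))
       \<and> (\<exists>c \<delta>. c > 0 \<and> \<delta> > 0 \<and>
            (\<forall>m. M1 mbar \<delta> m \<longrightarrow>
               (\<exists>!\<xi>. is_center mbar m \<xi>)
             \<and> (\<exists>\<epsilon>>0. \<forall>n \<xi>m \<xi>n. M1 mbar \<delta> n \<and> L1_dist m n < ennreal \<epsilon>
                    \<and> is_center mbar m \<xi>m \<and> is_center mbar n \<xi>n
                    \<longrightarrow> ennreal \<bar>\<xi>m - \<xi>n\<bar> \<le> ennreal c * L1_dist m n)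
             \<and> (\<exists>\<epsilon>>0. \<forall>n \<xi>m \<xi>n. M1 mbar \<delta> n \<and> L2sq_dist m n < ennreal (\<epsilon>\<^sup>2)
                    \<and> is_center mbar m \<xi>m \<and> is_center mbar n \<xi>n
                    \<longrightarrow> ennreal ((\<xi>m - \<xi>n)\<^sup>2) \<le> ennreal (c\<^sup>2) * L2sq_dist m n)))"
proof -
  obtain J' J'' where J': "\<forall>x. (J has_real_derivative J' x) (at x) \<and> (J' has_real_derivative J'' x) (at x)"
    and J''_cont: "continuous_on UNIV J''"
    using J_C2 by blast
  obtain C a where C: "C > 0" "a > 0" "\<forall>x. \<bar>deriv mbar x\<bar> \<le> C * exp (- a * \<bar>x\<bar>)"
    using mbar_decay by blast
  interpret front \<beta> m\<beta> J J' J'' mbar C a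
  proof
    show "(J has_real_derivative J' x) (at x)" "(J' has_real_derivative J'' x) (at x)" for x
      using J' by blast+
    show "\<bar>r\<bar> > 1 \<Longrightarrow> J r = 0" "mbar (- x) = - mbar x" "mbar differentiable (at x)"
      "mbar x = tanh (\<beta> * (LINT y|lborel. J (x - y) * mbar y))"
      "\<bar>deriv mbar x\<bar> \<le> C * exp (- a * \<bar>x\<bar>)" for r x
      using J_supp mbar_odd mbar_diff mbar_eq C(3) by blast+
  qed (fact J''_cont mb_eq mbar_incr mbar_top C(1,2))+
  show ?thesis
  proof (rule conjI[OF _ exI[of _ lip_const, OF exI[of _ \<delta>\<^sub>0]]])
    show "\<forall>m. classN m \<longrightarrow> (\<exists>\<xi>. is_center mbar m \<xi>)" using classN_has_center by blast
  qed (simp add: lip_const_pos delta0_pos M1_unique_center center_lipschitz_L1 center_lipschitz_L2)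
qed

end
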